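(* Let $X$ be a locally compact Polish space and $B\subseteq X$ dense. Let $\succeq'$ be a complete binary relation on $X$, and let $\succeq$ and $\succeq^*$ be complete, continuous, locally strict binary relations on $X$. If $\succeq'\cap(B\times B)\subseteq\succeq^*\cap\succeq\cap(B\times B)$, then $\succeq^*=\succeq$.
   Context: A binary relation $R\subseteq X\times X$ is complete if for all $x,y$, $xRy$ or $yRx$; continuous if closed in $X\times X$; locally strict if for all $x R y$ and every neighborhood $V$ of $(x,y)$ there is $(x',y')\in V$ with $x'Ry'$ and not $y'Rx'$. *)

theory Defs
  imports "HOL-Analysis.Analysis"
begin

abbreviation nhds_sets :: "'b::topological_space \<Rightarrow> 'b set set" where
  "nhds_sets p \<equiv> {V. \<exists>U. open U \<and> p \<in> U \<and> U \<subseteq> V}"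

definition complete_rel :: "('a \<times> 'a) set \<Rightarrow> bool" where
  "complete_rel R \<longleftrightarrow> (\<forall>x y. (x, y) \<in> R \<or> (y, x) \<in> R)"

definition continuous_rel :: "('a::topological_space \<times> 'a) set \<Rightarrow> bool" where
  "continuous_rel R \<longleftrightarrow> closed R"

definition locally_strict :: "('a::topological_space \<times> 'a) set \<Rightarrow> bool" where
  "locally_strict R \<longleftrightarrow>
     (\<forall>x y. (x, y) \<in> R \<longrightarrow>
        (\<forall>V. V \<in> nhds_sets (x, y) \<longrightarrow>
           (\<exists>x' y'. (x', y') \<in> V \<and> (x', y') \<in> R \<and> (y', x') \<notin> R)))"

end

theory Submission
  imports Defs
begin

text \<open>If \<open>(x, y) \<in> R - S\<close>, local strictness of \<open>R\<close> yields a pair in the open set \<open>- S\<close> that is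
  strictly \<open>R\<close>-related; since \<open>R\<close> is closed, strictness is an open condition, so by density
  there is such a pair \<open>(a, b)\<close> with \<open>a, b \<in> B\<close>. There \<open>(b, a) \<notin> R\<close> forces \<open>(b, a) \<notin> Rp\<close>,
  hence \<open>(a, b) \<in> Rp\<close> by completeness, hence \<open>(a, b) \<in> S\<close>: a contradiction. Applied to
  \<open>(R, Rs)\<close> and to \<open>(Rs, R)\<close> this gives both inclusions.\<close>

lemma locally_strictD:
  assumes "locally_strict R" "p \<in> R" "open U" "p \<in> U"
  obtains q where "q \<in> U" "q \<in> R" "prod.swap q \<notin> R"
proof -
  obtain x y where p: "p = (x, y)"
    by (cases p)
  have "U \<in> nhds_sets (x, y)"
    using assms(3,4) p by blast
  then obtain x' y' where "(x', y') \<in> U" "(x', y') \<in> R" "(y', x') \<notin> R"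
    using assms(1,2) p unfolding locally_strict_def by blast
  then show ?thesis
    using that[of "(x', y')"] by simp
qed

lemma open_not_converse_closed:
  assumes "closed R"
  shows "open {p. prod.swap p \<notin> R}"
proof -
  have "closed (prod.swap -` R)"
    by (rule closed_vimage[OF assms]) (rule continuous_on_swap)
  moreover have "{p. prod.swap p \<notin> R} = - (prod.swap -` R)"
    by auto
  ultimately show ?thesis
    by (simp add: open_Compl)
qed

lemma dense_Times_meets_open:
  assumes "closure B = UNIV" "open W" "W \<noteq> {}"
  obtains a b where "a \<in> B" "b \<in> B" "(a, b) \<in> W"
proof -
  have "closure (B \<times> B) = UNIV"
    using assms(1) by (simp add: closure_Times)
  then have "W \<inter> (B \<times> B) \<noteq> {}"
    using assms(2,3) open_Int_closure_eq_empty by auto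
  then show ?thesis
    using that by auto
qed

lemma locally_strict_subset_of_closed:
  assumes dense: "closure B = UNIV"
    and closed_R: "closed R" and strict_R: "locally_strict R" and closed_S: "closed S"
    and strict_in_S: "\<And>a b. a \<in> B \<Longrightarrow> b \<in> B \<Longrightarrow> (b, a) \<notin> R \<Longrightarrow> (a, b) \<in> S"
  shows "R \<subseteq> S"
proof
  fix p assume "p \<in> R"
  show "p \<in> S"
  proof (rule ccontr)
    assume "p \<notin> S"
    define W where "W = - S \<inter> {q. prod.swap q \<notin> R}"
    have "open W"
      unfolding W_def using closed_S open_not_converse_closed[OF closed_R] by auto
    moreover obtain q where "q \<in> - S" "q \<in> R" "prod.swap q \<notin> R"
      using locally_strictD[OF strict_R \<open>p \<in> R\<close>, of "- S"] closed_S \<open>p \<notin> S\<close>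
      by (auto simp: open_Compl)
    then have "W \<noteq> {}"
      unfolding W_def by blast
    ultimately obtain a b where "a \<in> B" "b \<in> B" "(a, b) \<in> W"
      using dense_Times_meets_open[OF dense] by blast
    then have "(b, a) \<notin> R" "(a, b) \<notin> S"
      unfolding W_def by auto
    then show False
      using strict_in_S \<open>a \<in> B\<close> \<open>b \<in> B\<close> by blast
  qed
qed

lemma complete_rel_strict_in:
  assumes "complete_rel Rp" "Rp \<inter> (B \<times> B) \<subseteq> S \<inter> R"
    and "a \<in> B" "b \<in> B" "(b, a) \<notin> R"
  shows "(a, b) \<in> S"
proof -
  have "(b, a) \<notin> Rp"
    using assms(2-5) by blast
  then have "(a, b) \<in> Rp"
    using assms(1) unfolding complete_rel_def by blast
  then show ?thesis
    using assms(2-4) by blast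
qed

theorem lemma11:
  fixes B :: "'a::polish_space set"
    and Rp R Rs :: "('a \<times> 'a) set"
  assumes lc: "locally_compact_space (euclidean :: 'a topology)"
    and dense: "closure B = UNIV"
    and cRp: "complete_rel Rp"
    and cR: "complete_rel R" and contR: "continuous_rel R" and lsR: "locally_strict R"
    and cRs: "complete_rel Rs" and contRs: "continuous_rel Rs" and lsRs: "locally_strict Rs"
    and sub: "Rp \<inter> (B \<times> B) \<subseteq> Rs \<inter> R \<inter> (B \<times> B)"
  shows "Rs = R"
proof
  have "Rp \<inter> (B \<times> B) \<subseteq> Rs \<inter> R" "Rp \<inter> (B \<times> B) \<subseteq> R \<inter> Rs"
    using sub by blast+
  note strict_in = this[THEN complete_rel_strict_in[OF cRp]]
  show "R \<subseteq> Rs"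
    using locally_strict_subset_of_closed[OF dense _ lsR _ strict_in(1)] contR contRs
    unfolding continuous_rel_def by blast
  show "Rs \<subseteq> R"
    using locally_strict_subset_of_closed[OF dense _ lsRs _ strict_in(2)] contR contRs
    unfolding continuous_rel_def by blast
qed

end
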